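(* Let $T<\infty$ and $\Delta_T=\{(s,t):0\le t\le s\le T\}$. There exists at most one solution $(R,C,q,K,H)\in\mathcal C_b^1(\Delta_T)^2\times\mathcal C_b^1([0,T])^3$ (with $C$ extended to $[0,T]^2$ by $C(s,t)=C(t,s)$) of the equations, for $(s,t)\in\Delta_T$, \begin{align*} \partial_sR(s,t)&=-f'(K(s))R(s,t)+\int_t^sR(u,t)R(s,u)\nu''(C(s,u))du,\\ \partial_sC(s,t)&=-f'(K(s))C(s,t)+\int_0^sR(s,u)\Big[\nu''(C(s,u))C(u,t)-\frac{q(t)\nu'(q(u))\nu''(q(s))}{\nu'(q_\star^2)}\Big]du\\&\quad+\int_0^tR(t,u)\Big[\nu'(C(s,u))-\frac{\nu'(q(s))\nu'(q(u))}{\nu'(q_\star^2)}\Big]du+q(t){\mathsf v}_\star'(q(s)),\\ \partial_sq(s)&=-f'(K(s))q(s)+\int_0^sR(s,u)\Big[q(u)\nu''(C(s,u))-\frac{q_\star^2\nu'(q(u))\nu''(q(s))}{\nu'(q_\star^2)}\Big]du+q_\star^2{\mathsf v}_\star'(q(s)),\\ \partial_sK(s)&=1-2f'(K(s))K(s)+2\int_0^sR(s,u)\Big[\psi(C(s,u))-\frac{\psi(q(s))\nu'(q(u))}{\nu'(q_\star^2)}\Big]du+2q(s){\mathsf v}_\star'(q(s)),\\ H(s)&=\int_0^sR(s,u)\Big[\nu'(C(s,u))-\frac{\nu'(q(s))\nu'(q(u))}{\nu'(q_\star^2)}\Big]du+{\mathsf v}_\star(q(s)), \end{align*} with boundary conditions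 $R(s,s)=1$ and $C(s,s)=K(s)$ for all $s\in[0,T]$, and $K(0)=1$, $q(0)=q_o$ given.
   Context: $m\ge2$, $b_2,\dots,b_m$ real with $b_m\ne0$, $\nu(r)=\sum_{p=2}^mb_p^2r^p$, $\psi(r)=r\nu''(r)+\nu'(r)$; $q_\star>0$, $q_o$ a real number, $E_\star,G_\star$ reals (with $G_\star=mE_\star/q_\star^2$ if $\nu(r)=b_m^2r^m$, the pure case). In the mixed case (any other $\nu$) ${\mathsf v}_p=\begin{bmatrix}q_\star^2\nu(q_\star^2)&q_\star^2\nu'(q_\star^2)\\ q_\star^2\nu'(q_\star^2)&\psi(q_\star^2)\end{bmatrix}^{-1}\begin{bmatrix}q_\star^2\\ p\end{bmatrix}$ and ${\mathsf v}_\star(r)=\sum_{p=2}^mb_p^2\langle{\mathsf v}_p,(E_\star,G_\star)\rangle r^p$; in the pure case ${\mathsf v}_\star(r)=E_\star q_\star^{-2m}r^m$. $f:[0,\infty)\to\mathbb R$ is differentiable with $f'$ locally Lipschitz, $\inf_{r\ge0}\{f'(r)-Ar^{2k-1}\}>-\infty$ for some $A>0,k>m/4$, and $\sup_r|f'(r)|(1+r)^{-\kappa}<\infty$ for some $\kappa$. $\mathcal C_b^1$ denotes bounded continuously differentiable functions. *)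

theory Defs
  imports "HOL-Analysis.Analysis"
begin

definition nu :: "nat \<Rightarrow> (nat \<Rightarrow> real) \<Rightarrow> real \<Rightarrow> real" where
  "nu m b r = (\<Sum>p=2..m. (b p)^2 * r^p)"

definition nu1 :: "nat \<Rightarrow> (nat \<Rightarrow> real) \<Rightarrow> real \<Rightarrow> real" where
  "nu1 m b r = (\<Sum>p=2..m. (b p)^2 * real p * r^(p - 1))"

definition nu2 :: "nat \<Rightarrow> (nat \<Rightarrow> real) \<Rightarrow> real \<Rightarrow> real" where
  "nu2 m b r = (\<Sum>p=2..m. (b p)^2 * real p * (real p - 1) * r^(p - 2))"

definition psi :: "nat \<Rightarrow> (nat \<Rightarrow> real) \<Rightarrow> real \<Rightarrow> real" where
  "psi m b r = r * nu2 m b r + nu1 m b r"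

definition pure_case :: "nat \<Rightarrow> (nat \<Rightarrow> real) \<Rightarrow> bool" where
  "pure_case m b \<longleftrightarrow> (\<forall>p\<in>{2..<m}. b p = 0)"

text \<open>Mixed case: v_p = M^{-1} (qs^2, p) with
  M = [[qs^2 nu(qs^2), qs^2 nu'(qs^2)], [qs^2 nu'(qs^2), psi(qs^2)]];
  the 2x2 inverse is written out via the adjugate formula.
  vcoef gives the inner product of v_p with (E, G).\<close>
definition vcoef :: "nat \<Rightarrow> (nat \<Rightarrow> real) \<Rightarrow> real \<Rightarrow> real \<Rightarrow> real \<Rightarrow> nat \<Rightarrow> real" where
  "vcoef m b qs E G p =
    (let x = qs^2; a = x * nu m b x; c = x * nu1 m b x; d = psi m b x;
         dt = a * d - c * c;
         v1 = (d * x - c * real p) / dt;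
         v2 = (- c * x + a * real p) / dt
     in v1 * E + v2 * G)"

definition vstar :: "nat \<Rightarrow> (nat \<Rightarrow> real) \<Rightarrow> real \<Rightarrow> real \<Rightarrow> real \<Rightarrow> real \<Rightarrow> real" where
  "vstar m b qs E G r =
    (if pure_case m b then E / qs^(2*m) * r^m
     else (\<Sum>p=2..m. (b p)^2 * vcoef m b qs E G p * r^p))"

definition vstar1 :: "nat \<Rightarrow> (nat \<Rightarrow> real) \<Rightarrow> real \<Rightarrow> real \<Rightarrow> real \<Rightarrow> real \<Rightarrow> real" where
  "vstar1 m b qs E G r =
    (if pure_case m b then E / qs^(2*m) * real m * r^(m - 1)
     else (\<Sum>p=2..m. (b p)^2 * vcoef m b qs E G p * real p * r^(p - 1)))"

definition triangle :: "real \<Rightarrow> (real \<times> real) set" where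
  "triangle T = {(s, t). 0 \<le> t \<and> t \<le> s \<and> s \<le> T}"

text \<open>Bounded continuously differentiable functions on a set of the plane
  (derivatives within the set, so one-sided at the boundary).\<close>
definition Cb1_plane :: "(real \<times> real) set \<Rightarrow> (real \<Rightarrow> real \<Rightarrow> real) \<Rightarrow> bool" where
  "Cb1_plane S F \<longleftrightarrow>
     (\<exists>F1 F2. continuous_on S F1 \<and> continuous_on S F2 \<and>
        (\<forall>x\<in>S. ((\<lambda>(s, t). F s t) has_derivative (\<lambda>h. F1 x * fst h + F2 x * snd h)) (at x within S)))
     \<and> bounded ((\<lambda>(s, t). F s t) ` S)"

definition Cb1_line :: "real set \<Rightarrow> (real \<Rightarrow> real) \<Rightarrow> bool" where
  "Cb1_line S F \<longleftrightarrow>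
     (\<exists>F'. continuous_on S F' \<and> (\<forall>x\<in>S. (F has_real_derivative F' x) (at x within S)))
     \<and> bounded (F ` S)"

definition Csym :: "(real \<Rightarrow> real \<Rightarrow> real) \<Rightarrow> real \<Rightarrow> real \<Rightarrow> real" where
  "Csym C s t = (if t \<le> s then C s t else C t s)"

definition is_solution ::
  "nat \<Rightarrow> (nat \<Rightarrow> real) \<Rightarrow> real \<Rightarrow> real \<Rightarrow> real \<Rightarrow> (real \<Rightarrow> real) \<Rightarrow> real \<Rightarrow> real \<Rightarrow>
   (real \<Rightarrow> real \<Rightarrow> real) \<Rightarrow> (real \<Rightarrow> real \<Rightarrow> real) \<Rightarrow> (real \<Rightarrow> real) \<Rightarrow> (real \<Rightarrow> real) \<Rightarrow> (real \<Rightarrow> real) \<Rightarrow> bool"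
  where
  "is_solution m b qs E G f' T qo R C q K H \<longleftrightarrow>
    (let D = nu1 m b (qs^2) in
     Cb1_plane (triangle T) R \<and> Cb1_plane (triangle T) C \<and>
     Cb1_line {0..T} q \<and> Cb1_line {0..T} K \<and> Cb1_line {0..T} H \<and>
     (\<forall>s\<in>{0..T}. 0 \<le> K s) \<and>
     (\<forall>(s, t)\<in>triangle T.
        ((\<lambda>s'. R s' t) has_real_derivative
           (- f' (K s) * R s t + integral {t..s} (\<lambda>u. R u t * R s u * nu2 m b (C s u))))
          (at s within {t..T}) \<and>
        ((\<lambda>s'. C s' t) has_real_derivative
           (- f' (K s) * C s t
            + integral {0..s} (\<lambda>u. R s u * (nu2 m b (C s u) * Csym C u t
                                   - q t * nu1 m b (q u) * nu2 m b (q s) / D))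
            + integral {0..t} (\<lambda>u. R t u * (nu1 m b (C s u) - nu1 m b (q s) * nu1 m b (q u) / D))
            + q t * vstar1 m b qs E G (q s)))
          (at s within {t..T})) \<and>
     (\<forall>s\<in>{0..T}.
        (q has_real_derivative
           (- f' (K s) * q s
            + integral {0..s} (\<lambda>u. R s u * (q u * nu2 m b (C s u)
                                   - qs^2 * nu1 m b (q u) * nu2 m b (q s) / D))
            + qs^2 * vstar1 m b qs E G (q s)))
          (at s within {0..T}) \<and>
        (K has_real_derivative
           (1 - 2 * f' (K s) * K s
            + 2 * integral {0..s} (\<lambda>u. R s u * (psi m b (C s u) - psi m b (q s) * nu1 m b (q u) / D))
            + 2 * q s * vstar1 m b qs E G (q s)))
          (at s within {0..T}) \<and>
        H s = integral {0..s} (\<lambda>u. R s u * (nu1 m b (C s u) - nu1 m b (q s) * nu1 m b (q u) / D))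
              + vstar m b qs E G (q s) \<and>
        R s s = 1 \<and> C s s = K s) \<and>
     K 0 = 1 \<and> q 0 = qo)"

end

theory Submission
  imports Defs
begin

(* Uniqueness follows from a bootstrap over short time windows. Suppose two solutions
   coincide up to time a and differ by at most M up to time a + delta. Every right-hand
   side is built from R, C, q, K by sums, products, the polynomials nu', nu'', psi and
   vstar', the function f' (locally Lipschitz, evaluated at K >= 0) and integrals over
   ranges of length at most T; hence the right-hand sides of the two solutions differ by
   at most L * M, with L independent of M. Integrating in s over a window of length
   delta <= 1 / (4 L), starting at time a or on the diagonal (where R = 1 and C = K),
   bounds the discrepancy by M / 2, so M = 0. Windows of length delta exhaust [0, T], and
   H is then given explicitly by the other unknowns. *)

lemma nonpos_if_halvable:
  fixes d :: "'a \<Rightarrow> real"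
  assumes bound: "\<forall>i\<in>I. d i \<le> B"
    and halve: "\<And>M. 0 \<le> M \<Longrightarrow> \<forall>i\<in>I. d i \<le> M \<Longrightarrow> \<forall>i\<in>I. d i \<le> M / 2"
    and "i \<in> I"
  shows "d i \<le> 0"
proof -
  have halved: "\<forall>i\<in>I. d i \<le> max B 0 / 2 ^ n" for n
  proof (induction n)
    case 0
    then show ?case using bound by force
  next
    case (Suc n)
    then show ?case using halve[of "max B 0 / 2 ^ n"] by (simp add: field_simps)
  qed
  have "(\<lambda>n. max B 0 / 2 ^ n) \<longlonglongrightarrow> 0"
    by (rule LIMSEQ_divide_realpow_zero) simp
  then show ?thesis
    by (rule LIMSEQ_le_const) (use halved \<open>i \<in> I\<close> in blast)
qed

lemma real_induct_step:
  fixes P :: "real \<Rightarrow> bool"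
  assumes "0 < \<delta>" and "P 0"
    and step: "\<And>a. 0 \<le> a \<Longrightarrow> P a \<Longrightarrow> P (a + \<delta>)"
    and down: "\<And>a b. P a \<Longrightarrow> b \<le> a \<Longrightarrow> P b"
  shows "P x"
proof -
  have multiples: "P (real n * \<delta>)" for n
  proof (induction n)
    case (Suc n)
    have "P (real n * \<delta> + \<delta>)"
      using step[OF _ Suc] \<open>0 < \<delta>\<close> by simp
    then show ?case
      by (simp add: algebra_simps)
  qed (simp add: \<open>P 0\<close>)
  obtain n where "x / \<delta> \<le> real n"
    using real_arch_simple by blast
  then have "x \<le> real n * \<delta>"
    using \<open>0 < \<delta>\<close> by (simp add: divide_le_eq)
  then show ?thesis
    using down multiples by blast
qed

lemma diff_increment_le:
  fixes f g f' g' :: "real \<Rightarrow> real"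
  assumes "p \<le> x"
    and "\<And>s. s \<in> {p..x} \<Longrightarrow> (f has_real_derivative f' s) (at s within {p..x})"
    and "\<And>s. s \<in> {p..x} \<Longrightarrow> (g has_real_derivative g' s) (at s within {p..x})"
    and "\<And>s. s \<in> {p..x} \<Longrightarrow> \<bar>f' s - g' s\<bar> \<le> c"
  shows "\<bar>(f x - g x) - (f p - g p)\<bar> \<le> c * (x - p)"
proof -
  have "norm ((\<lambda>s. f s - g s) x - (\<lambda>s. f s - g s) p) \<le> c * norm (x - p)"
    by (rule field_differentiable_bound[where S = "{p..x}" and f' = "\<lambda>s. f' s - g' s"])
       (use assms in \<open>auto intro: DERIV_diff\<close>)
  then show ?thesis
    using \<open>p \<le> x\<close> by simp
qed

lemma integral_abs_le:
  fixes f :: "real \<Rightarrow> real"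
  assumes "f integrable_on {a..b}" "a \<le> b" "b - a \<le> W"
    and "\<And>u. u \<in> {a..b} \<Longrightarrow> \<bar>f u\<bar> \<le> B"
  shows "\<bar>integral {a..b} f\<bar> \<le> B * W"
proof -
  have "0 \<le> B"
    using assms(4)[of a] \<open>a \<le> b\<close> by auto
  then have "\<bar>integral {a..b} f\<bar> \<le> B * (b - a)"
    using integrable_bound[of B f a b] assms by (simp add: content_real)
  also have "\<dots> \<le> B * W"
    using \<open>0 \<le> B\<close> assms(3) by (rule mult_left_mono[rotated])
  finally show ?thesis .
qed

lemma continuous_on_compose_pair:
  assumes "continuous_on S (\<lambda>(x, y). F x y)" "continuous_on U a" "continuous_on U c"
    and "\<And>u. u \<in> U \<Longrightarrow> (a u, c u) \<in> S"
  shows "continuous_on U (\<lambda>u. F (a u) (c u))"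
  using continuous_on_compose2[OF assms(1) continuous_on_Pair[OF assms(2,3)]] assms(4) by auto

(* M bounds the discrepancy between two solutions; controlled S X Y says that on the
   index set S M the two expressions are uniformly bounded and differ by O(M), with
   constants independent of M. *)
definition controlled :: "(real \<Rightarrow> 'i set) \<Rightarrow> ('i \<Rightarrow> real) \<Rightarrow> ('i \<Rightarrow> real) \<Rightarrow> bool" where
  "controlled S X Y \<longleftrightarrow> (\<exists>A L. \<forall>M\<ge>0. \<forall>i\<in>S M. \<bar>X i\<bar> \<le> A \<and> \<bar>Y i\<bar> \<le> A \<and> \<bar>X i - Y i\<bar> \<le> L * M)"

lemma controlledI:
  assumes "\<And>M i. 0 \<le> M \<Longrightarrow> i \<in> S M \<Longrightarrow> \<bar>X i\<bar> \<le> A \<and> \<bar>Y i\<bar> \<le> A \<and> \<bar>X i - Y i\<bar> \<le> L * M"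
  shows "controlled S X Y"
  using assms unfolding controlled_def by blast

lemma controlledE:
  assumes "controlled S X Y"
  obtains A L where "\<And>M i. 0 \<le> M \<Longrightarrow> i \<in> S M \<Longrightarrow> \<bar>X i\<bar> \<le> A \<and> \<bar>Y i\<bar> \<le> A \<and> \<bar>X i - Y i\<bar> \<le> L * M"
  using assms unfolding controlled_def by blast

lemma controlled_diff_bound:
  assumes "controlled S X Y"
  obtains L where "0 \<le> L" "\<And>M i. 0 \<le> M \<Longrightarrow> i \<in> S M \<Longrightarrow> \<bar>X i - Y i\<bar> \<le> L * M"
proof -
  obtain A L where "\<And>M i. 0 \<le> M \<Longrightarrow> i \<in> S M \<Longrightarrow> \<bar>X i - Y i\<bar> \<le> L * M"
    using controlledE[OF assms] by metis
  then have "\<And>M i. 0 \<le> M \<Longrightarrow> i \<in> S M \<Longrightarrow> \<bar>X i - Y i\<bar> \<le> max L 0 * M"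
    by (meson max.cobounded1 mult_right_mono order_trans)
  then show thesis
    using that[of "max L 0"] by simp
qed

lemma controlled_const: "controlled S (\<lambda>i. c) (\<lambda>i. c)"
  by (rule controlledI[where A = "\<bar>c\<bar>" and L = 0]) simp

lemma controlled_add:
  assumes "controlled S X1 Y1" "controlled S X2 Y2"
  shows "controlled S (\<lambda>i. X1 i + X2 i) (\<lambda>i. Y1 i + Y2 i)"
proof -
  obtain A1 L1 A2 L2 where
    1: "\<And>M i. 0 \<le> M \<Longrightarrow> i \<in> S M \<Longrightarrow> \<bar>X1 i\<bar> \<le> A1 \<and> \<bar>Y1 i\<bar> \<le> A1 \<and> \<bar>X1 i - Y1 i\<bar> \<le> L1 * M" and
    2: "\<And>M i. 0 \<le> M \<Longrightarrow> i \<in> S M \<Longrightarrow> \<bar>X2 i\<bar> \<le> A2 \<and> \<bar>Y2 i\<bar> \<le> A2 \<and> \<bar>X2 i - Y2 i\<bar> \<le> L2 * M"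
    using controlledE[OF assms(1)] controlledE[OF assms(2)] by metis
  show ?thesis
  proof (rule controlledI[where A = "A1 + A2" and L = "L1 + L2"])
    fix M i
    assume "0 \<le> M" "i \<in> S M"
    with 1 2 show "\<bar>X1 i + X2 i\<bar> \<le> A1 + A2 \<and> \<bar>Y1 i + Y2 i\<bar> \<le> A1 + A2 \<and>
        \<bar>X1 i + X2 i - (Y1 i + Y2 i)\<bar> \<le> (L1 + L2) * M"
      by (smt (verit, best) distrib_right)
  qed
qed

lemma controlled_uminus:
  assumes "controlled S X Y"
  shows "controlled S (\<lambda>i. - X i) (\<lambda>i. - Y i)"
proof -
  obtain A L where "\<And>M i. 0 \<le> M \<Longrightarrow> i \<in> S M \<Longrightarrow> \<bar>X i\<bar> \<le> A \<and> \<bar>Y i\<bar> \<le> A \<and> \<bar>X i - Y i\<bar> \<le> L * M"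
    using controlledE[OF assms] by metis
  then show ?thesis
    by (intro controlledI[where A = A and L = L]) (simp add: abs_minus_commute)
qed

lemma controlled_diff:
  assumes "controlled S X1 Y1" "controlled S X2 Y2"
  shows "controlled S (\<lambda>i. X1 i - X2 i) (\<lambda>i. Y1 i - Y2 i)"
  using controlled_add[OF assms(1) controlled_uminus[OF assms(2)]] by simp

lemma abs_mult_diff_le:
  fixes x1 x2 y1 y2 :: real
  assumes "\<bar>x1\<bar> \<le> A1" "\<bar>y2\<bar> \<le> A2" "\<bar>x1 - y1\<bar> \<le> e1" "\<bar>x2 - y2\<bar> \<le> e2"
  shows "\<bar>x1 * x2 - y1 * y2\<bar> \<le> A1 * e2 + A2 * e1"
proof -
  have "\<bar>x1 * x2 - y1 * y2\<bar> = \<bar>x1 * (x2 - y2) + (x1 - y1) * y2\<bar>"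
    by (simp add: algebra_simps)
  also have "\<dots> \<le> \<bar>x1\<bar> * \<bar>x2 - y2\<bar> + \<bar>x1 - y1\<bar> * \<bar>y2\<bar>"
    by (metis abs_mult abs_triangle_ineq)
  also have "\<dots> \<le> A1 * e2 + e1 * A2"
    using assms by (intro add_mono mult_mono) auto
  finally show ?thesis
    by (simp add: mult.commute)
qed

lemma controlled_mult:
  assumes "controlled S X1 Y1" "controlled S X2 Y2"
  shows "controlled S (\<lambda>i. X1 i * X2 i) (\<lambda>i. Y1 i * Y2 i)"
proof -
  obtain A1 L1 A2 L2 where
    1: "\<And>M i. 0 \<le> M \<Longrightarrow> i \<in> S M \<Longrightarrow> \<bar>X1 i\<bar> \<le> A1 \<and> \<bar>Y1 i\<bar> \<le> A1 \<and> \<bar>X1 i - Y1 i\<bar> \<le> L1 * M" and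
    2: "\<And>M i. 0 \<le> M \<Longrightarrow> i \<in> S M \<Longrightarrow> \<bar>X2 i\<bar> \<le> A2 \<and> \<bar>Y2 i\<bar> \<le> A2 \<and> \<bar>X2 i - Y2 i\<bar> \<le> L2 * M"
    using controlledE[OF assms(1)] controlledE[OF assms(2)] by metis
  show ?thesis
  proof (rule controlledI[where A = "A1 * A2" and L = "A1 * L2 + A2 * L1"])
    fix M i
    assume "0 \<le> M" "i \<in> S M"
    note b = 1[OF this] 2[OF this]
    have "\<bar>X1 i * X2 i - Y1 i * Y2 i\<bar> \<le> A1 * (L2 * M) + A2 * (L1 * M)"
      by (rule abs_mult_diff_le) (use b in auto)
    moreover have "\<bar>X1 i * X2 i\<bar> \<le> A1 * A2" "\<bar>Y1 i * Y2 i\<bar> \<le> A1 * A2"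
      using b by (auto simp: abs_mult intro!: mult_mono)
    ultimately show "\<bar>X1 i * X2 i\<bar> \<le> A1 * A2 \<and> \<bar>Y1 i * Y2 i\<bar> \<le> A1 * A2 \<and>
        \<bar>X1 i * X2 i - Y1 i * Y2 i\<bar> \<le> (A1 * L2 + A2 * L1) * M"
      by (simp add: algebra_simps)
  qed
qed

lemma controlled_divide:
  assumes "controlled S X Y"
  shows "controlled S (\<lambda>i. X i / c) (\<lambda>i. Y i / c)"
  using controlled_mult[OF assms controlled_const[of S "1 / c"]] by simp

lemma controlled_power:
  assumes "controlled S X Y"
  shows "controlled S (\<lambda>i. X i ^ n) (\<lambda>i. Y i ^ n)"
  by (induction n) (simp_all add: controlled_const controlled_mult assms)

lemma controlled_sum:
  assumes "\<And>p. p \<in> P \<Longrightarrow> controlled S (X p) (Y p)"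
  shows "controlled S (\<lambda>i. \<Sum>p\<in>P. X p i) (\<lambda>i. \<Sum>p\<in>P. Y p i)"
  using assms
  by (induction P rule: infinite_finite_induct) (simp_all add: controlled_const controlled_add)

lemma controlled_lipschitz_compose:
  assumes "controlled S X Y" "closed U"
    and lipschitz: "\<And>r. \<exists>L. L-lipschitz_on (U \<inter> {-r..r}) g"
    and "\<And>M i. 0 \<le> M \<Longrightarrow> i \<in> S M \<Longrightarrow> X i \<in> U \<and> Y i \<in> U"
  shows "controlled S (\<lambda>i. g (X i)) (\<lambda>i. g (Y i))"
proof -
  obtain A L where
    XY: "\<And>M i. 0 \<le> M \<Longrightarrow> i \<in> S M \<Longrightarrow> \<bar>X i\<bar> \<le> A \<and> \<bar>Y i\<bar> \<le> A \<and> \<bar>X i - Y i\<bar> \<le> L * M"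
    using controlledE[OF assms(1)] by metis
  define V where "V = U \<inter> {-A..A}"
  obtain Lg where Lg: "Lg-lipschitz_on V g"
    using lipschitz V_def by blast
  have "compact V"
    unfolding V_def using \<open>closed U\<close> by (intro closed_Int_compact) auto
  then have "bounded (g ` V)"
    by (intro compact_imp_bounded compact_continuous_image lipschitz_on_continuous_on[OF Lg])
  then obtain B where B: "\<And>x. x \<in> V \<Longrightarrow> \<bar>g x\<bar> \<le> B"
    unfolding bounded_iff by auto
  show ?thesis
  proof (rule controlledI[where A = B and L = "Lg * L"])
    fix M i
    assume Mi: "0 \<le> M" "i \<in> S M"
    have "\<bar>X i\<bar> \<le> A" "\<bar>Y i\<bar> \<le> A"
      using XY[OF Mi] by auto
    then have V: "X i \<in> V" "Y i \<in> V"
      using assms(4)[OF Mi] by (auto simp: V_def abs_le_iff)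
    have "\<bar>g (X i) - g (Y i)\<bar> \<le> Lg * \<bar>X i - Y i\<bar>"
      using lipschitz_onD[OF Lg V] by (simp add: dist_real_def)
    also have "\<dots> \<le> Lg * (L * M)"
      using XY[OF Mi] lipschitz_on_nonneg[OF Lg] by (intro mult_left_mono) auto
    finally show "\<bar>g (X i)\<bar> \<le> B \<and> \<bar>g (Y i)\<bar> \<le> B \<and> \<bar>g (X i) - g (Y i)\<bar> \<le> Lg * L * M"
      using B V by (simp add: mult.assoc)
  qed
qed

(* The integrand is indexed by pairs (i, u) and written with fst and snd rather than a
   tuple pattern, so that the rules above apply to it by higher-order unification. *)
lemma controlled_integral:
  fixes lo hi :: "'i \<Rightarrow> real"
  assumes "controlled (\<lambda>M. {(i, u). i \<in> S M \<and> u \<in> {lo i..hi i}}) (\<lambda>j. X (fst j) (snd j)) (\<lambda>j. Y (fst j) (snd j))"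
    and "\<And>M i. 0 \<le> M \<Longrightarrow> i \<in> S M \<Longrightarrow>
      X i integrable_on {lo i..hi i} \<and> Y i integrable_on {lo i..hi i} \<and> lo i \<le> hi i \<and> hi i - lo i \<le> W"
  shows "controlled S (\<lambda>i. integral {lo i..hi i} (X i)) (\<lambda>i. integral {lo i..hi i} (Y i))"
proof -
  obtain A L where XY0: "\<And>M j. 0 \<le> M \<Longrightarrow> j \<in> {(i, u). i \<in> S M \<and> u \<in> {lo i..hi i}} \<Longrightarrow>
      \<bar>X (fst j) (snd j)\<bar> \<le> A \<and> \<bar>Y (fst j) (snd j)\<bar> \<le> A \<and> \<bar>X (fst j) (snd j) - Y (fst j) (snd j)\<bar> \<le> L * M"
    using controlledE[OF assms(1)] by blast
  have XY: "\<bar>X i u\<bar> \<le> A \<and> \<bar>Y i u\<bar> \<le> A \<and> \<bar>X i u - Y i u\<bar> \<le> L * M"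
    if "0 \<le> M" "i \<in> S M" "u \<in> {lo i..hi i}" for M i u
    using XY0[of M "(i, u)"] that by simp
  show ?thesis
  proof (rule controlledI[where A = "A * W" and L = "L * W"])
    fix M i
    assume Mi: "0 \<le> M" "i \<in> S M"
    note int = assms(2)[OF Mi]
    have "integral {lo i..hi i} (X i) - integral {lo i..hi i} (Y i) = integral {lo i..hi i} (\<lambda>u. X i u - Y i u)"
      using int by (simp add: integral_diff)
    moreover have "\<bar>integral {lo i..hi i} (\<lambda>u. X i u - Y i u)\<bar> \<le> (L * M) * W"
      using int XY[OF Mi] by (intro integral_abs_le integrable_diff) auto
    moreover have "\<bar>integral {lo i..hi i} (X i)\<bar> \<le> A * W" "\<bar>integral {lo i..hi i} (Y i)\<bar> \<le> A * W"
      using int XY[OF Mi] by (auto intro!: integral_abs_le)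
    ultimately show "\<bar>integral {lo i..hi i} (X i)\<bar> \<le> A * W \<and> \<bar>integral {lo i..hi i} (Y i)\<bar> \<le> A * W \<and>
        \<bar>integral {lo i..hi i} (X i) - integral {lo i..hi i} (Y i)\<bar> \<le> L * W * M"
      by (simp add: algebra_simps)
  qed
qed

lemma controlled_nu1:
  "controlled S X Y \<Longrightarrow> controlled S (\<lambda>i. nu1 m b (X i)) (\<lambda>i. nu1 m b (Y i))"
  unfolding nu1_def by (intro controlled_sum controlled_mult controlled_const controlled_power)

lemma controlled_nu2:
  "controlled S X Y \<Longrightarrow> controlled S (\<lambda>i. nu2 m b (X i)) (\<lambda>i. nu2 m b (Y i))"
  unfolding nu2_def by (intro controlled_sum controlled_mult controlled_const controlled_power)

lemma controlled_psi:
  "controlled S X Y \<Longrightarrow> controlled S (\<lambda>i. psi m b (X i)) (\<lambda>i. psi m b (Y i))"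
  unfolding psi_def by (intro controlled_add controlled_mult controlled_nu1 controlled_nu2)

lemma controlled_vstar1:
  "controlled S X Y \<Longrightarrow> controlled S (\<lambda>i. vstar1 m b qs E G (X i)) (\<lambda>i. vstar1 m b qs E G (Y i))"
  unfolding vstar1_def
  by (cases "pure_case m b") (auto intro!: controlled_sum controlled_mult controlled_divide controlled_const controlled_power)

lemma continuous_on_nu1 [continuous_intros]:
  "continuous_on U a \<Longrightarrow> continuous_on U (\<lambda>u. nu1 m b (a u))"
  unfolding nu1_def by (intro continuous_intros)

lemma continuous_on_nu2 [continuous_intros]:
  "continuous_on U a \<Longrightarrow> continuous_on U (\<lambda>u. nu2 m b (a u))"
  unfolding nu2_def by (intro continuous_intros)

lemma continuous_on_psi [continuous_intros]:
  "continuous_on U a \<Longrightarrow> continuous_on U (\<lambda>u. psi m b (a u))"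
  unfolding psi_def by (intro continuous_intros)

lemma Csym_eq_max_min: "Csym C u t = C (max u t) (min u t)"
  unfolding Csym_def by auto

locale dynamics_system =
  fixes m :: nat and b :: "nat \<Rightarrow> real" and qs E G :: real and fp :: "real \<Rightarrow> real"
begin

abbreviation D :: real where "D \<equiv> nu1 m b (qs^2)"

definition rhs_R :: "(real \<Rightarrow> real \<Rightarrow> real) \<Rightarrow> (real \<Rightarrow> real \<Rightarrow> real) \<Rightarrow> (real \<Rightarrow> real) \<Rightarrow> real \<Rightarrow> real \<Rightarrow> real"
  where "rhs_R R C K s t = - fp (K s) * R s t + integral {t..s} (\<lambda>u. R u t * R s u * nu2 m b (C s u))"

definition rhs_C :: "(real \<Rightarrow> real \<Rightarrow> real) \<Rightarrow> (real \<Rightarrow> real \<Rightarrow> real) \<Rightarrow> (real \<Rightarrow> real) \<Rightarrow> (real \<Rightarrow> real) \<Rightarrow>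
    real \<Rightarrow> real \<Rightarrow> real"
  where "rhs_C R C q K s t =
    - fp (K s) * C s t
    + integral {0..s} (\<lambda>u. R s u * (nu2 m b (C s u) * Csym C u t - q t * nu1 m b (q u) * nu2 m b (q s) / D))
    + integral {0..t} (\<lambda>u. R t u * (nu1 m b (C s u) - nu1 m b (q s) * nu1 m b (q u) / D))
    + q t * vstar1 m b qs E G (q s)"

definition rhs_q :: "(real \<Rightarrow> real \<Rightarrow> real) \<Rightarrow> (real \<Rightarrow> real \<Rightarrow> real) \<Rightarrow> (real \<Rightarrow> real) \<Rightarrow> (real \<Rightarrow> real) \<Rightarrow>
    real \<Rightarrow> real"
  where "rhs_q R C q K s =
    - fp (K s) * q s
    + integral {0..s} (\<lambda>u. R s u * (q u * nu2 m b (C s u) - qs^2 * nu1 m b (q u) * nu2 m b (q s) / D))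
    + qs^2 * vstar1 m b qs E G (q s)"

definition rhs_K :: "(real \<Rightarrow> real \<Rightarrow> real) \<Rightarrow> (real \<Rightarrow> real \<Rightarrow> real) \<Rightarrow> (real \<Rightarrow> real) \<Rightarrow> (real \<Rightarrow> real) \<Rightarrow>
    real \<Rightarrow> real"
  where "rhs_K R C q K s =
    1 - 2 * fp (K s) * K s
    + 2 * integral {0..s} (\<lambda>u. R s u * (psi m b (C s u) - psi m b (q s) * nu1 m b (q u) / D))
    + 2 * q s * vstar1 m b qs E G (q s)"

end

locale solution = dynamics_system +
  fixes T qo :: real and R C :: "real \<Rightarrow> real \<Rightarrow> real" and q K H :: "real \<Rightarrow> real"
  assumes solution: "is_solution m b qs E G fp T qo R C q K H"
begin

lemma R_deriv:
  "(s, t) \<in> triangle T \<Longrightarrow> ((\<lambda>s'. R s' t) has_real_derivative rhs_R R C K s t) (at s within {t..T})"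
  using solution unfolding is_solution_def rhs_R_def Let_def by auto

lemma C_deriv:
  "(s, t) \<in> triangle T \<Longrightarrow> ((\<lambda>s'. C s' t) has_real_derivative rhs_C R C q K s t) (at s within {t..T})"
  using solution unfolding is_solution_def rhs_C_def Let_def by auto

lemma q_deriv: "s \<in> {0..T} \<Longrightarrow> (q has_real_derivative rhs_q R C q K s) (at s within {0..T})"
  using solution unfolding is_solution_def rhs_q_def Let_def by auto

lemma K_deriv: "s \<in> {0..T} \<Longrightarrow> (K has_real_derivative rhs_K R C q K s) (at s within {0..T})"
  using solution unfolding is_solution_def rhs_K_def Let_def by auto

lemma H_eq:
  "s \<in> {0..T} \<Longrightarrow>
    H s = integral {0..s} (\<lambda>u. R s u * (nu1 m b (C s u) - nu1 m b (q s) * nu1 m b (q u) / D))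
      + vstar m b qs E G (q s)"
  using solution unfolding is_solution_def Let_def by auto

lemma R_diagonal: "s \<in> {0..T} \<Longrightarrow> R s s = 1"
  and C_diagonal: "s \<in> {0..T} \<Longrightarrow> C s s = K s"
  and K_nonneg: "s \<in> {0..T} \<Longrightarrow> 0 \<le> K s"
  and K_initial: "K 0 = 1"
  and q_initial: "q 0 = qo"
  using solution unfolding is_solution_def Let_def by auto

lemma bounded_values:
  obtains B where "\<And>s t. (s, t) \<in> triangle T \<Longrightarrow> \<bar>R s t\<bar> \<le> B \<and> \<bar>C s t\<bar> \<le> B \<and> \<bar>q s\<bar> \<le> B \<and> \<bar>K s\<bar> \<le> B"
proof -
  have "bounded ((\<lambda>(s, t). R s t) ` triangle T)" "bounded ((\<lambda>(s, t). C s t) ` triangle T)"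
    "bounded (q ` {0..T})" "bounded (K ` {0..T})"
    using solution unfolding is_solution_def Cb1_plane_def Cb1_line_def Let_def by auto
  then obtain B1 B2 B3 B4 where
    "\<forall>x\<in>(\<lambda>(s, t). R s t) ` triangle T. \<bar>x\<bar> \<le> B1" "\<forall>x\<in>(\<lambda>(s, t). C s t) ` triangle T. \<bar>x\<bar> \<le> B2"
    "\<forall>x\<in>q ` {0..T}. \<bar>x\<bar> \<le> B3" "\<forall>x\<in>K ` {0..T}. \<bar>x\<bar> \<le> B4"
    unfolding bounded_iff real_norm_def by metis
  note B = this[THEN ball_imageD]
  show thesis
  proof (rule that[of "max (max B1 B2) (max B3 B4)"])
    fix s t
    assume st: "(s, t) \<in> triangle T"
    then have "s \<in> {0..T}"
      by (auto simp: triangle_def)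
    with st B show "\<bar>R s t\<bar> \<le> max (max B1 B2) (max B3 B4) \<and> \<bar>C s t\<bar> \<le> max (max B1 B2) (max B3 B4) \<and>
        \<bar>q s\<bar> \<le> max (max B1 B2) (max B3 B4) \<and> \<bar>K s\<bar> \<le> max (max B1 B2) (max B3 B4)"
      by (fastforce simp: le_max_iff_disj)
  qed
qed

lemma continuous_on_R: "continuous_on (triangle T) (\<lambda>(s, t). R s t)"
  and continuous_on_C: "continuous_on (triangle T) (\<lambda>(s, t). C s t)"
  and continuous_on_q: "continuous_on {0..T} q"
  using solution unfolding is_solution_def Cb1_plane_def Cb1_line_def Let_def
  by (auto intro: has_derivative_continuous_on DERIV_continuous_on)

lemma continuous_on_R_comp:
  "continuous_on U a \<Longrightarrow> continuous_on U c \<Longrightarrow> (\<And>u. u \<in> U \<Longrightarrow> (a u, c u) \<in> triangle T) \<Longrightarrow>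
    continuous_on U (\<lambda>u. R (a u) (c u))"
  by (rule continuous_on_compose_pair[OF continuous_on_R])

lemma continuous_on_C_comp:
  "continuous_on U a \<Longrightarrow> continuous_on U c \<Longrightarrow> (\<And>u. u \<in> U \<Longrightarrow> (a u, c u) \<in> triangle T) \<Longrightarrow>
    continuous_on U (\<lambda>u. C (a u) (c u))"
  by (rule continuous_on_compose_pair[OF continuous_on_C])

lemma continuous_on_Csym_comp:
  "continuous_on U a \<Longrightarrow> continuous_on U c \<Longrightarrow> (\<And>u. u \<in> U \<Longrightarrow> a u \<in> {0..T} \<and> c u \<in> {0..T}) \<Longrightarrow>
    continuous_on U (\<lambda>u. Csym C (a u) (c u))"
  unfolding Csym_eq_max_min
  by (rule continuous_on_C_comp) (auto intro!: continuous_intros simp: triangle_def)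

lemma continuous_on_q_comp:
  "continuous_on U a \<Longrightarrow> (\<And>u. u \<in> U \<Longrightarrow> a u \<in> {0..T}) \<Longrightarrow> continuous_on U (\<lambda>u. q (a u))"
  using continuous_on_compose2[OF continuous_on_q] by blast

lemmas continuous_on_solution_comp =
  continuous_on_R_comp continuous_on_C_comp continuous_on_Csym_comp continuous_on_q_comp

(* D may vanish, so divisions by it are unfolded to products with its inverse, which
   avoids the nonzero side condition of continuous_on_divide. *)

lemma integrable_rhs_R:
  "(s, t) \<in> triangle T \<Longrightarrow> (\<lambda>u. R u t * R s u * nu2 m b (C s u)) integrable_on {t..s}"
  by (rule integrable_continuous_interval)
     (auto intro!: continuous_intros continuous_on_solution_comp simp: triangle_def)

lemma integrable_rhs_C1:
  "(s, t) \<in> triangle T \<Longrightarrow>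
    (\<lambda>u. R s u * (nu2 m b (C s u) * Csym C u t - q t * nu1 m b (q u) * nu2 m b (q s) / D)) integrable_on {0..s}"
  unfolding divide_inverse
  by (rule integrable_continuous_interval)
     (auto intro!: continuous_intros continuous_on_solution_comp simp: triangle_def)

lemma integrable_rhs_C2:
  "(s, t) \<in> triangle T \<Longrightarrow>
    (\<lambda>u. R t u * (nu1 m b (C s u) - nu1 m b (q s) * nu1 m b (q u) / D)) integrable_on {0..t}"
  unfolding divide_inverse
  by (rule integrable_continuous_interval)
     (auto intro!: continuous_intros continuous_on_solution_comp simp: triangle_def)

lemma integrable_rhs_q:
  "s \<in> {0..T} \<Longrightarrow>
    (\<lambda>u. R s u * (q u * nu2 m b (C s u) - qs^2 * nu1 m b (q u) * nu2 m b (q s) / D)) integrable_on {0..s}"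
  unfolding divide_inverse
  by (rule integrable_continuous_interval)
     (auto intro!: continuous_intros continuous_on_solution_comp simp: triangle_def)

lemma integrable_rhs_K:
  "s \<in> {0..T} \<Longrightarrow>
    (\<lambda>u. R s u * (psi m b (C s u) - psi m b (q s) * nu1 m b (q u) / D)) integrable_on {0..s}"
  unfolding divide_inverse
  by (rule integrable_continuous_interval)
     (auto intro!: continuous_intros continuous_on_solution_comp simp: triangle_def)

end

locale solution_pair = dynamics_system m b qs E G fp +
  s1: solution m b qs E G fp T qo R1 C1 q1 K1 H1 + s2: solution m b qs E G fp T qo R2 C2 q2 K2 H2
  for m b qs E G fp T qo R1 C1 q1 K1 H1 R2 C2 q2 K2 H2 +
  assumes fp_lipschitz: "\<forall>r. \<exists>L. L-lipschitz_on {0..r} fp"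
begin

lemma pair_bounded:
  obtains B where "\<And>s t. (s, t) \<in> triangle T \<Longrightarrow>
    \<bar>R1 s t\<bar> \<le> B \<and> \<bar>R2 s t\<bar> \<le> B \<and> \<bar>C1 s t\<bar> \<le> B \<and> \<bar>C2 s t\<bar> \<le> B \<and>
    \<bar>q1 s\<bar> \<le> B \<and> \<bar>q2 s\<bar> \<le> B \<and> \<bar>K1 s\<bar> \<le> B \<and> \<bar>K2 s\<bar> \<le> B"
proof -
  obtain B1 B2 where
    B1: "\<And>s t. (s, t) \<in> triangle T \<Longrightarrow> \<bar>R1 s t\<bar> \<le> B1 \<and> \<bar>C1 s t\<bar> \<le> B1 \<and> \<bar>q1 s\<bar> \<le> B1 \<and> \<bar>K1 s\<bar> \<le> B1" and
    B2: "\<And>s t. (s, t) \<in> triangle T \<Longrightarrow> \<bar>R2 s t\<bar> \<le> B2 \<and> \<bar>C2 s t\<bar> \<le> B2 \<and> \<bar>q2 s\<bar> \<le> B2 \<and> \<bar>K2 s\<bar> \<le> B2"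
    using s1.bounded_values s2.bounded_values by metis
  show thesis
    by (rule that[of "max B1 B2"]) (use B1 B2 in \<open>simp add: le_max_iff_disj\<close>)
qed

definition gap :: "real \<Rightarrow> real \<Rightarrow> real" where
  "gap s t = max (max \<bar>R1 s t - R2 s t\<bar> \<bar>C1 s t - C2 s t\<bar>) (max \<bar>q1 s - q2 s\<bar> \<bar>K1 s - K2 s\<bar>)"

definition close_upto :: "real \<Rightarrow> real \<Rightarrow> bool" where
  "close_upto M a \<longleftrightarrow> (\<forall>(s, t)\<in>triangle T. s \<le> a \<longrightarrow> gap s t \<le> M)"

definition close_points :: "real \<Rightarrow> (real \<times> real) set" where
  "close_points M = {(s, t) \<in> triangle T. close_upto M s}"

lemma close_upto_mono: "close_upto M a \<Longrightarrow> a' \<le> a \<Longrightarrow> close_upto M a'"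
  unfolding close_upto_def by fastforce

lemma close_uptoD:
  assumes "close_upto M a" "(s, t) \<in> triangle T" "s \<le> a"
  shows "\<bar>R1 s t - R2 s t\<bar> \<le> M" "\<bar>C1 s t - C2 s t\<bar> \<le> M" "\<bar>q1 s - q2 s\<bar> \<le> M" "\<bar>K1 s - K2 s\<bar> \<le> M"
  using assms unfolding close_upto_def gap_def by fastforce+

lemma controlled_R:
  assumes "\<And>M i. 0 \<le> M \<Longrightarrow> i \<in> S M \<Longrightarrow> (a i, c i) \<in> triangle T \<and> (\<exists>s. close_upto M s \<and> a i \<le> s)"
  shows "controlled S (\<lambda>i. R1 (a i) (c i)) (\<lambda>i. R2 (a i) (c i))"
proof -
  obtain B where B: "\<And>s t. (s, t) \<in> triangle T \<Longrightarrow> \<bar>R1 s t\<bar> \<le> B \<and> \<bar>R2 s t\<bar> \<le> B"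
    using pair_bounded by metis
  show ?thesis
  proof (rule controlledI[where A = B and L = 1])
    fix M i
    assume "0 \<le> M" "i \<in> S M"
    then obtain s where "(a i, c i) \<in> triangle T" "close_upto M s" "a i \<le> s"
      using assms by blast
    then show "\<bar>R1 (a i) (c i)\<bar> \<le> B \<and> \<bar>R2 (a i) (c i)\<bar> \<le> B \<and> \<bar>R1 (a i) (c i) - R2 (a i) (c i)\<bar> \<le> 1 * M"
      using B close_uptoD(1) by simp
  qed
qed

lemma controlled_C:
  assumes "\<And>M i. 0 \<le> M \<Longrightarrow> i \<in> S M \<Longrightarrow> (a i, c i) \<in> triangle T \<and> (\<exists>s. close_upto M s \<and> a i \<le> s)"
  shows "controlled S (\<lambda>i. C1 (a i) (c i)) (\<lambda>i. C2 (a i) (c i))"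
proof -
  obtain B where B: "\<And>s t. (s, t) \<in> triangle T \<Longrightarrow> \<bar>C1 s t\<bar> \<le> B \<and> \<bar>C2 s t\<bar> \<le> B"
    using pair_bounded by metis
  show ?thesis
  proof (rule controlledI[where A = B and L = 1])
    fix M i
    assume "0 \<le> M" "i \<in> S M"
    then obtain s where "(a i, c i) \<in> triangle T" "close_upto M s" "a i \<le> s"
      using assms by blast
    then show "\<bar>C1 (a i) (c i)\<bar> \<le> B \<and> \<bar>C2 (a i) (c i)\<bar> \<le> B \<and> \<bar>C1 (a i) (c i) - C2 (a i) (c i)\<bar> \<le> 1 * M"
      using B close_uptoD(2) by simp
  qed
qed

lemma controlled_q:
  assumes "\<And>M i. 0 \<le> M \<Longrightarrow> i \<in> S M \<Longrightarrow> a i \<in> {0..T} \<and> (\<exists>s. close_upto M s \<and> a i \<le> s)"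
  shows "controlled S (\<lambda>i. q1 (a i)) (\<lambda>i. q2 (a i))"
proof -
  obtain B where B: "\<And>s t. (s, t) \<in> triangle T \<Longrightarrow> \<bar>q1 s\<bar> \<le> B \<and> \<bar>q2 s\<bar> \<le> B"
    using pair_bounded by metis
  show ?thesis
  proof (rule controlledI[where A = B and L = 1])
    fix M i
    assume "0 \<le> M" "i \<in> S M"
    then obtain s where "(a i, 0) \<in> triangle T" "close_upto M s" "a i \<le> s"
      using assms by (auto simp: triangle_def)
    then show "\<bar>q1 (a i)\<bar> \<le> B \<and> \<bar>q2 (a i)\<bar> \<le> B \<and> \<bar>q1 (a i) - q2 (a i)\<bar> \<le> 1 * M"
      using B close_uptoD(3) by simp
  qed
qed

lemma controlled_K:
  assumes "\<And>M i. 0 \<le> M \<Longrightarrow> i \<in> S M \<Longrightarrow> a i \<in> {0..T} \<and> (\<exists>s. close_upto M s \<and> a i \<le> s)"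
  shows "controlled S (\<lambda>i. K1 (a i)) (\<lambda>i. K2 (a i))"
proof -
  obtain B where B: "\<And>s t. (s, t) \<in> triangle T \<Longrightarrow> \<bar>K1 s\<bar> \<le> B \<and> \<bar>K2 s\<bar> \<le> B"
    using pair_bounded by metis
  show ?thesis
  proof (rule controlledI[where A = B and L = 1])
    fix M i
    assume "0 \<le> M" "i \<in> S M"
    then obtain s where "(a i, 0) \<in> triangle T" "close_upto M s" "a i \<le> s"
      using assms by (auto simp: triangle_def)
    then show "\<bar>K1 (a i)\<bar> \<le> B \<and> \<bar>K2 (a i)\<bar> \<le> B \<and> \<bar>K1 (a i) - K2 (a i)\<bar> \<le> 1 * M"
      using B close_uptoD(4) by simp
  qed
qed

lemma controlled_Csym:
  assumes "\<And>M i. 0 \<le> M \<Longrightarrow> i \<in> S M \<Longrightarrow>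
    a i \<in> {0..T} \<and> c i \<in> {0..T} \<and> (\<exists>s. close_upto M s \<and> a i \<le> s \<and> c i \<le> s)"
  shows "controlled S (\<lambda>i. Csym C1 (a i) (c i)) (\<lambda>i. Csym C2 (a i) (c i))"
  unfolding Csym_eq_max_min
  by (rule controlled_C) (use assms in \<open>fastforce simp: triangle_def\<close>)

lemma controlled_fp_K:
  assumes "\<And>M i. 0 \<le> M \<Longrightarrow> i \<in> S M \<Longrightarrow> a i \<in> {0..T} \<and> (\<exists>s. close_upto M s \<and> a i \<le> s)"
  shows "controlled S (\<lambda>i. fp (K1 (a i))) (\<lambda>i. fp (K2 (a i)))"
proof (rule controlled_lipschitz_compose[OF controlled_K[OF assms] closed_atLeast])
  fix r
  obtain L where "L-lipschitz_on {0..\<bar>r\<bar>} fp"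
    using fp_lipschitz by blast
  then show "\<exists>L. L-lipschitz_on ({0..} \<inter> {-r..r}) fp"
    by (intro exI[of _ L]) (rule lipschitz_on_subset, auto)
next
  fix M i
  assume "0 \<le> M" "i \<in> S M"
  then show "K1 (a i) \<in> {0..} \<and> K2 (a i) \<in> {0..}"
    using assms s1.K_nonneg s2.K_nonneg by auto
qed

lemmas controlled_intros =
  controlled_const controlled_add controlled_diff controlled_uminus controlled_mult controlled_divide
  controlled_nu1 controlled_nu2 controlled_psi controlled_vstar1
  controlled_R controlled_C controlled_Csym controlled_q controlled_K controlled_fp_K

lemma controlled_rhs_R:
  "controlled close_points (\<lambda>i. rhs_R R1 C1 K1 (fst i) (snd i)) (\<lambda>i. rhs_R R2 C2 K2 (fst i) (snd i))"
  unfolding rhs_R_def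
  by (intro controlled_intros controlled_integral[where W = T];
      auto simp: close_points_def triangle_def intro: s1.integrable_rhs_R s2.integrable_rhs_R)

lemma controlled_rhs_C:
  "controlled close_points (\<lambda>i. rhs_C R1 C1 q1 K1 (fst i) (snd i)) (\<lambda>i. rhs_C R2 C2 q2 K2 (fst i) (snd i))"
  unfolding rhs_C_def
  by (intro controlled_intros controlled_integral[where W = T];
      auto simp: close_points_def triangle_def
        intro: s1.integrable_rhs_C1 s2.integrable_rhs_C1 s1.integrable_rhs_C2 s2.integrable_rhs_C2)

lemma controlled_rhs_q:
  "controlled close_points (\<lambda>i. rhs_q R1 C1 q1 K1 (fst i)) (\<lambda>i. rhs_q R2 C2 q2 K2 (fst i))"
  unfolding rhs_q_def
  by (intro controlled_intros controlled_integral[where W = T];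
      auto simp: close_points_def triangle_def intro: s1.integrable_rhs_q s2.integrable_rhs_q)

lemma controlled_rhs_K:
  "controlled close_points (\<lambda>i. rhs_K R1 C1 q1 K1 (fst i)) (\<lambda>i. rhs_K R2 C2 q2 K2 (fst i))"
  unfolding rhs_K_def
  by (intro controlled_intros controlled_integral[where W = T];
      auto simp: close_points_def triangle_def intro: s1.integrable_rhs_K s2.integrable_rhs_K)

definition drift_bound :: "real \<Rightarrow> bool" where
  "drift_bound L \<longleftrightarrow> (\<forall>M s t. 0 \<le> M \<longrightarrow> (s, t) \<in> close_points M \<longrightarrow>
     \<bar>rhs_R R1 C1 K1 s t - rhs_R R2 C2 K2 s t\<bar> \<le> L * M \<and>
     \<bar>rhs_C R1 C1 q1 K1 s t - rhs_C R2 C2 q2 K2 s t\<bar> \<le> L * M \<and>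
     \<bar>rhs_q R1 C1 q1 K1 s - rhs_q R2 C2 q2 K2 s\<bar> \<le> L * M \<and>
     \<bar>rhs_K R1 C1 q1 K1 s - rhs_K R2 C2 q2 K2 s\<bar> \<le> L * M)"

lemma drift_bound_exists: "\<exists>L\<ge>0. drift_bound L"
proof -
  obtain L1 where L1: "0 \<le> L1" "\<And>M s t. 0 \<le> M \<Longrightarrow> (s, t) \<in> close_points M \<Longrightarrow>
      \<bar>rhs_R R1 C1 K1 s t - rhs_R R2 C2 K2 s t\<bar> \<le> L1 * M"
    using controlled_diff_bound[OF controlled_rhs_R] by (metis fst_conv snd_conv)
  obtain L2 where L2: "0 \<le> L2" "\<And>M s t. 0 \<le> M \<Longrightarrow> (s, t) \<in> close_points M \<Longrightarrow>
      \<bar>rhs_C R1 C1 q1 K1 s t - rhs_C R2 C2 q2 K2 s t\<bar> \<le> L2 * M"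
    using controlled_diff_bound[OF controlled_rhs_C] by (metis fst_conv snd_conv)
  obtain L3 where L3: "0 \<le> L3" "\<And>M s t. 0 \<le> M \<Longrightarrow> (s, t) \<in> close_points M \<Longrightarrow>
      \<bar>rhs_q R1 C1 q1 K1 s - rhs_q R2 C2 q2 K2 s\<bar> \<le> L3 * M"
    using controlled_diff_bound[OF controlled_rhs_q] by (metis fst_conv)
  obtain L4 where L4: "0 \<le> L4" "\<And>M s t. 0 \<le> M \<Longrightarrow> (s, t) \<in> close_points M \<Longrightarrow>
      \<bar>rhs_K R1 C1 q1 K1 s - rhs_K R2 C2 q2 K2 s\<bar> \<le> L4 * M"
    using controlled_diff_bound[OF controlled_rhs_K] by (metis fst_conv)
  have "L * M \<le> (L1 + L2 + L3 + L4) * M" if "L \<in> {L1, L2, L3, L4}" "0 \<le> M" for L M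
    using that L1(1) L2(1) L3(1) L4(1) by (auto intro!: mult_right_mono)
  then have "drift_bound (L1 + L2 + L3 + L4)"
    unfolding drift_bound_def using L1(2) L2(2) L3(2) L4(2) by (meson insertI1 insertI2 order_trans)
  then show ?thesis
    using L1(1) L2(1) L3(1) L4(1) by (intro exI[of _ "L1 + L2 + L3 + L4"]) simp
qed

lemma drift_increments:
  assumes "drift_bound L" "0 \<le> M" "close_upto M x" "0 \<le> y" "y \<le> p" "p \<le> x" "x \<le> T"
  shows "\<bar>(R1 x y - R2 x y) - (R1 p y - R2 p y)\<bar> \<le> L * M * (x - p)"
    and "\<bar>(C1 x y - C2 x y) - (C1 p y - C2 p y)\<bar> \<le> L * M * (x - p)"
    and "\<bar>(q1 x - q2 x) - (q1 p - q2 p)\<bar> \<le> L * M * (x - p)"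
    and "\<bar>(K1 x - K2 x) - (K1 p - K2 p)\<bar> \<le> L * M * (x - p)"
proof -
  have tri: "(s, y) \<in> triangle T" if "s \<in> {p..x}" for s
    using that assms by (auto simp: triangle_def)
  have "(s, y) \<in> close_points M" if "s \<in> {p..x}" for s
    using tri[OF that] close_upto_mono[OF assms(3)] that by (auto simp: close_points_def)
  then have drift: "\<bar>rhs_R R1 C1 K1 s y - rhs_R R2 C2 K2 s y\<bar> \<le> L * M \<and>
      \<bar>rhs_C R1 C1 q1 K1 s y - rhs_C R2 C2 q2 K2 s y\<bar> \<le> L * M \<and>
      \<bar>rhs_q R1 C1 q1 K1 s - rhs_q R2 C2 q2 K2 s\<bar> \<le> L * M \<and>
      \<bar>rhs_K R1 C1 q1 K1 s - rhs_K R2 C2 q2 K2 s\<bar> \<le> L * M" if "s \<in> {p..x}" for s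
    using assms(1,2) that unfolding drift_bound_def by blast
  have sub: "{p..x} \<subseteq> {y..T}" "{p..x} \<subseteq> {0..T}"
    using assms by auto
  have q: "s \<in> {0..T}" if "s \<in> {p..x}" for s
    using that sub by auto
  show "\<bar>(R1 x y - R2 x y) - (R1 p y - R2 p y)\<bar> \<le> L * M * (x - p)"
    by (rule diff_increment_le[where f' = "\<lambda>s. rhs_R R1 C1 K1 s y" and g' = "\<lambda>s. rhs_R R2 C2 K2 s y"])
       (use assms(6) drift tri sub in \<open>auto intro: DERIV_subset[OF s1.R_deriv] DERIV_subset[OF s2.R_deriv]\<close>)
  show "\<bar>(C1 x y - C2 x y) - (C1 p y - C2 p y)\<bar> \<le> L * M * (x - p)"
    by (rule diff_increment_le[where f' = "\<lambda>s. rhs_C R1 C1 q1 K1 s y" and g' = "\<lambda>s. rhs_C R2 C2 q2 K2 s y"])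
       (use assms(6) drift tri sub in \<open>auto intro: DERIV_subset[OF s1.C_deriv] DERIV_subset[OF s2.C_deriv]\<close>)
  show "\<bar>(q1 x - q2 x) - (q1 p - q2 p)\<bar> \<le> L * M * (x - p)"
    by (rule diff_increment_le[where f' = "rhs_q R1 C1 q1 K1" and g' = "rhs_q R2 C2 q2 K2"])
       (use assms(6) drift q sub in \<open>auto intro: DERIV_subset[OF s1.q_deriv] DERIV_subset[OF s2.q_deriv]\<close>)
  show "\<bar>(K1 x - K2 x) - (K1 p - K2 p)\<bar> \<le> L * M * (x - p)"
    by (rule diff_increment_le[where f' = "rhs_K R1 C1 q1 K1" and g' = "rhs_K R2 C2 q2 K2"])
       (use assms(6) drift q sub in \<open>auto intro: DERIV_subset[OF s1.K_deriv] DERIV_subset[OF s2.K_deriv]\<close>)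
qed

context
  fixes L \<delta> a M :: real
  assumes drift: "drift_bound L" and L_nonneg: "0 \<le> L" and short: "L * \<delta> \<le> 1 / 4"
    and a: "0 \<le> a" "close_upto 0 a" and M: "0 \<le> M" "close_upto M (a + \<delta>)"
begin

lemma window_increment_le: "p \<le> x \<Longrightarrow> x - p \<le> \<delta> \<Longrightarrow> L * M * (x - p) \<le> M / 4"
proof -
  assume "p \<le> x" "x - p \<le> \<delta>"
  then have "L * (x - p) \<le> 1 / 4"
    using short L_nonneg mult_left_mono[of "x - p" \<delta> L] by linarith
  then show ?thesis
    using M(1) mult_left_mono[of "L * (x - p)" "1 / 4" M] by (simp add: algebra_simps)
qed

lemma qK_gap_le_quarter:
  assumes "a \<le> x" "x \<le> a + \<delta>" "x \<le> T"
  shows "\<bar>q1 x - q2 x\<bar> \<le> M / 4" "\<bar>K1 x - K2 x\<bar> \<le> M / 4"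
proof -
  have "(a, 0) \<in> triangle T"
    using a(1) assms by (simp add: triangle_def)
  then have "q1 a - q2 a = 0" "K1 a - K2 a = 0"
    using close_uptoD(3,4)[OF a(2)] by fastforce+
  moreover have "close_upto M x"
    using close_upto_mono[OF M(2) assms(2)] .
  then have "\<bar>(q1 x - q2 x) - (q1 a - q2 a)\<bar> \<le> L * M * (x - a)"
    "\<bar>(K1 x - K2 x) - (K1 a - K2 a)\<bar> \<le> L * M * (x - a)"
    using drift_increments(3,4)[OF drift M(1) _ order_refl a(1)] assms by auto
  moreover have "L * M * (x - a) \<le> M / 4"
    using window_increment_le assms by simp
  ultimately show "\<bar>q1 x - q2 x\<bar> \<le> M / 4" "\<bar>K1 x - K2 x\<bar> \<le> M / 4"
    by linarith+
qed

lemma RC_gap_le_half: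
  assumes xy: "(x, y) \<in> triangle T" and "a \<le> x" "x \<le> a + \<delta>"
  shows "\<bar>R1 x y - R2 x y\<bar> \<le> M / 2" "\<bar>C1 x y - C2 x y\<bar> \<le> M / 2"
proof -
  \<comment> \<open>integrate from time a, or from the diagonal where R1 = R2 = 1 and C1 - C2 = K1 - K2\<close>
  define p where "p = max a y"
  have p: "y \<le> p" "p \<le> x" "x - p \<le> \<delta>"
    using assms xy by (auto simp: p_def triangle_def)
  have start: "\<bar>R1 p y - R2 p y\<bar> \<le> M / 4 \<and> \<bar>C1 p y - C2 p y\<bar> \<le> M / 4"
  proof (cases "y \<le> a")
    case True
    then have "p = a" "(a, y) \<in> triangle T"
      using xy assms by (auto simp: p_def triangle_def)
    then show ?thesis
      using close_uptoD(1,2)[OF a(2)] M(1) by fastforce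
  next
    case False
    then have "p = y" "y \<in> {0..T}"
      using xy by (auto simp: p_def triangle_def)
    moreover have "\<bar>K1 y - K2 y\<bar> \<le> M / 4"
      using qK_gap_le_quarter(2)[of y] False p xy assms(3) by (auto simp: p_def triangle_def)
    ultimately show ?thesis
      using s1.R_diagonal s2.R_diagonal s1.C_diagonal s2.C_diagonal M(1) by simp
  qed
  have "close_upto M x"
    using close_upto_mono[OF M(2) assms(3)] .
  then have "\<bar>(R1 x y - R2 x y) - (R1 p y - R2 p y)\<bar> \<le> L * M * (x - p)"
    "\<bar>(C1 x y - C2 x y) - (C1 p y - C2 p y)\<bar> \<le> L * M * (x - p)"
    using drift_increments(1,2)[OF drift M(1)] p xy by (auto simp: triangle_def)
  moreover have "L * M * (x - p) \<le> M / 4"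
    using window_increment_le p by simp
  ultimately show "\<bar>R1 x y - R2 x y\<bar> \<le> M / 2" "\<bar>C1 x y - C2 x y\<bar> \<le> M / 2"
    using start by linarith+
qed

lemma close_upto_halves: "close_upto (M / 2) (a + \<delta>)"
proof -
  have "gap x y \<le> M / 2" if xy: "(x, y) \<in> triangle T" "x \<le> a + \<delta>" for x y
  proof (cases "x \<le> a")
    case True
    then have "gap x y \<le> 0"
      using a(2) xy(1) unfolding close_upto_def by blast
    then show ?thesis
      using M(1) by linarith
  next
    case False
    then have "\<bar>R1 x y - R2 x y\<bar> \<le> M / 2" "\<bar>C1 x y - C2 x y\<bar> \<le> M / 2"
      "\<bar>q1 x - q2 x\<bar> \<le> M / 2" "\<bar>K1 x - K2 x\<bar> \<le> M / 2"
      using qK_gap_le_quarter[of x] RC_gap_le_half[OF xy(1)] xy M(1) by (auto simp: triangle_def)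
    then show ?thesis
      unfolding gap_def max.bounded_iff by blast
  qed
  then show ?thesis
    unfolding close_upto_def by blast
qed

end

lemma gap_bounded:
  obtains B where "\<And>s t. (s, t) \<in> triangle T \<Longrightarrow> gap s t \<le> B"
proof -
  obtain B where B: "\<And>s t. (s, t) \<in> triangle T \<Longrightarrow>
    \<bar>R1 s t\<bar> \<le> B \<and> \<bar>R2 s t\<bar> \<le> B \<and> \<bar>C1 s t\<bar> \<le> B \<and> \<bar>C2 s t\<bar> \<le> B \<and>
    \<bar>q1 s\<bar> \<le> B \<and> \<bar>q2 s\<bar> \<le> B \<and> \<bar>K1 s\<bar> \<le> B \<and> \<bar>K2 s\<bar> \<le> B"
    using pair_bounded by blast
  show thesis
  proof (rule that[of "2 * B"])
    fix s t
    assume "(s, t) \<in> triangle T"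
    with B[of s t] show "gap s t \<le> 2 * B"
      unfolding gap_def by (simp add: abs_le_iff)
  qed
qed

lemma close_upto_extends: "\<exists>\<delta>>0. \<forall>a. 0 \<le> a \<longrightarrow> close_upto 0 a \<longrightarrow> close_upto 0 (a + \<delta>)"
proof -
  obtain L where L: "0 \<le> L" "drift_bound L"
    using drift_bound_exists by blast
  define \<delta> where "\<delta> = 1 / (4 * (L + 1))"
  have \<delta>: "0 < \<delta>" "L * \<delta> \<le> 1 / 4"
    using L(1) by (auto simp: \<delta>_def field_simps)
  obtain B where B: "\<And>s t. (s, t) \<in> triangle T \<Longrightarrow> gap s t \<le> B"
    using gap_bounded by blast
  have "close_upto 0 (a + \<delta>)" if a: "0 \<le> a" "close_upto 0 a" for a
  proof -
    let ?I = "{(s, t) \<in> triangle T. s \<le> a + \<delta>}"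
    have close_iff: "close_upto M (a + \<delta>) \<longleftrightarrow> (\<forall>i\<in>?I. case_prod gap i \<le> M)" for M
      unfolding close_upto_def by auto
    have "case_prod gap i \<le> 0" if "i \<in> ?I" for i
    proof (rule nonpos_if_halvable[OF _ _ that])
      show "\<forall>i\<in>?I. case_prod gap i \<le> B"
        using B by auto
      show "\<forall>i\<in>?I. case_prod gap i \<le> M / 2" if "0 \<le> M" "\<forall>i\<in>?I. case_prod gap i \<le> M" for M
        using close_upto_halves[OF L(2,1) \<delta>(2) a that(1)] that(2) close_iff by blast
    qed
    then show ?thesis
      using close_iff by blast
  qed
  then show ?thesis
    using \<delta>(1) by blast
qed

lemma close_upto_initial: "close_upto 0 0"
proof -
  have "gap s t \<le> 0" if "(s, t) \<in> triangle T" "s \<le> 0" for s t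
  proof -
    have "s = 0" "t = 0" "0 \<in> {0..T}"
      using that by (auto simp: triangle_def)
    then show ?thesis
      using s1.R_diagonal s2.R_diagonal s1.C_diagonal s2.C_diagonal
        s1.K_initial s2.K_initial s1.q_initial s2.q_initial
      by (simp add: gap_def)
  qed
  then show ?thesis
    unfolding close_upto_def by blast
qed

lemma solutions_coincide: "close_upto 0 T"
proof -
  obtain \<delta> where "0 < \<delta>" "\<And>a. 0 \<le> a \<Longrightarrow> close_upto 0 a \<Longrightarrow> close_upto 0 (a + \<delta>)"
    using close_upto_extends by blast
  then show ?thesis
    using real_induct_step[of \<delta> "close_upto 0"] close_upto_initial close_upto_mono by blast
qed

lemma H_agree:
  assumes "\<And>s t. (s, t) \<in> triangle T \<Longrightarrow> R1 s t = R2 s t \<and> C1 s t = C2 s t \<and> q1 s = q2 s"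
    and "s \<in> {0..T}"
  shows "H1 s = H2 s"
proof -
  have "integral {0..s} (\<lambda>u. R1 s u * (nu1 m b (C1 s u) - nu1 m b (q1 s) * nu1 m b (q1 u) / D))
      = integral {0..s} (\<lambda>u. R2 s u * (nu1 m b (C2 s u) - nu1 m b (q2 s) * nu1 m b (q2 u) / D))"
  proof (rule integral_cong)
    fix u
    assume "u \<in> {0..s}"
    then have "(s, u) \<in> triangle T" "(u, 0) \<in> triangle T"
      using \<open>s \<in> {0..T}\<close> by (auto simp: triangle_def)
    then show "R1 s u * (nu1 m b (C1 s u) - nu1 m b (q1 s) * nu1 m b (q1 u) / D)
        = R2 s u * (nu1 m b (C2 s u) - nu1 m b (q2 s) * nu1 m b (q2 u) / D)"
      using assms(1) by simp
  qed
  then show ?thesis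
    using s1.H_eq[OF assms(2)] s2.H_eq[OF assms(2)] assms(1)[of s 0] assms(2)
    by (simp add: triangle_def)
qed

end

theorem proposition3p4:
  fixes m :: nat and b :: "nat \<Rightarrow> real" and qs qo E G T :: real
    and f f' :: "real \<Rightarrow> real"
    and R1 C1 R2 C2 :: "real \<Rightarrow> real \<Rightarrow> real" and q1 K1 H1 q2 K2 H2 :: "real \<Rightarrow> real"
  assumes "m \<ge> 2" and "b m \<noteq> 0" and "qs > 0"
    and "pure_case m b \<Longrightarrow> G = real m * E / qs^2"
    and "\<forall>r\<ge>0. (f has_real_derivative f' r) (at r within {0..})"
    and "\<forall>Rr. \<exists>L. L-lipschitz_on {0..Rr} f'"
    and "\<exists>A k c. A > 0 \<and> k > real m / 4 \<and> (\<forall>r\<ge>0. f' r - A * r powr (2 * k - 1) \<ge> c)"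
    and "\<exists>\<kappa> c. \<forall>r\<ge>0. \<bar>f' r\<bar> * (1 + r) powr (- \<kappa>) \<le> c"
    and "is_solution m b qs E G f' T qo R1 C1 q1 K1 H1"
    and "is_solution m b qs E G f' T qo R2 C2 q2 K2 H2"
  shows "(\<forall>(s, t)\<in>triangle T. R1 s t = R2 s t \<and> C1 s t = C2 s t)
       \<and> (\<forall>s\<in>{0..T}. q1 s = q2 s \<and> K1 s = K2 s \<and> H1 s = H2 s)"
proof -
  interpret solution_pair m b qs E G f' T qo R1 C1 q1 K1 H1 R2 C2 q2 K2 H2
    by unfold_locales (use assms(6,9,10) in auto)
  have agree: "R1 s t = R2 s t \<and> C1 s t = C2 s t \<and> q1 s = q2 s \<and> K1 s = K2 s"
    if "(s, t) \<in> triangle T" for s t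
    using close_uptoD[OF solutions_coincide that] that by (simp add: triangle_def)
  have "(s, 0) \<in> triangle T" if "s \<in> {0..T}" for s
    using that by (simp add: triangle_def)
  moreover have "H1 s = H2 s" if "s \<in> {0..T}" for s
    using H_agree[OF _ that] agree by blast
  ultimately show ?thesis
    using agree by blast
qed

end
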